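(* Let $\xi$ be an integrable random variable, $M\in\mathcal M$, $I\in\mathcal N$ and $t\ge0$ (resp. $t>0$ for the second identity). Then, under the convention $0/0:=0$, almost surely $$\mathbb I^M_t\,\mathbb E[\xi\mid\mathcal G_t\vee\sigma(R_I)]=\mathbb I^M_t\,\frac{\mathbb E_{M,R_I}[\xi\,\mathbb I^M_t]}{\mathbb E_{M,R_I}[\mathbb I^M_t]},\qquad \mathbb I^M_{t-}\,\mathbb E[\xi\mid\mathcal G^-_t\vee\sigma(R_I)]=\mathbb I^M_{t-}\,\frac{\mathbb E_{M,R_I}[\xi\,\mathbb I^M_{t-}]}{\mathbb E_{M,R_I}[\mathbb I^M_{t-}]}.$$ (For $I=\emptyset$, $\sigma(R_I)$ is the trivial $\sigma$-algebra.)
   Context: Standing framework. Let $(\Omega,\mathcal A,P)$ be a complete probability space where $\Omega$ is a Polish space and $\mathcal A$ its Borel $\sigma$-algebra; let $\mathcal Z\subset\mathcal A$ denote the family of $P$-null sets. Let $E$ be a separable complete metric space with Borel $\sigma$-algebra $\mathcal E$. Let $T_i:\Omega\to[0,\infty]$ and $Z_i:\Omega\to E$, $i\in\mathbb N$, be random variables such that for every $i\in\mathbb N$: $Z_{2i-1}=Z_{2i}$, $T_{2i-1}\le T_{2i}$, and $T_{2i-1}<T_{2i}$ on $\{T_{2i}<\infty\}$. Assume $\mathbb E[\sum_{i=1}^\infty\mathbf 1_{\{T_i\le t\}}]<\infty$ for all $t\ge0$. Let $\mathcal N$ be the set of finite subsets of $\mathbb N$ and $\mathcal M$ the set of finite subsets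 of $\{1,3,5,\dots\}$. For $I\in\mathcal N$ let $E_I=E^{|I|}$, $\mathcal E_I=\mathcal B(E_I)$, $Z_I=(Z_i)_{i\in I}$, and define the random counting measure $\mu_I$ on $[0,\infty)\times E_I$ by $\mu_I([0,t]\times B)=\mathbf 1_{\{t\ge T_i=T_j\ \forall i,j\in I\}\cap\{T_i\neq T_j\ \forall i\in I,\,j\notin I\}}\mathbf 1_{\{Z_I\in B\}}$, $t\ge0$, $B\in\mathcal E_I$. Let $Q_I=\sup\{t\ge0:\mu_I([0,t]\times E_I)=0\}$ and $R_I=(Q_I,Z_I)$. Information: $\mathcal G_t=\sigma\big(\{T_{2i-1}\le t<T_{2i}\}\cap\{Z_{2i}\in B\}:B\in\mathcal E,i\in\mathbb N\big)\vee\mathcal Z$ ($t\ge0$), $\mathcal G^-_t=\sigma\big(\{T_{2i-1}< t\le T_{2i}\}\cap\{Z_{2i}\in B\}:B\in\mathcal E,i\in\mathbb N\big)\vee\mathcal Z$ ($t>0$). For $M\in\mathcal M$: $A^M_t=\bigcap_{i\in M}\{T_i\le t<T_{i+1}\}\cap\bigcap_{i\text{ odd},\,i\notin M}(\Omega\setminus\{T_i\le t<T_{i+1}\})$, $A^M_{t-}$ defined in the same way with $\{T_i<t\le T_{i+1}\}$ in place of $\{T_i\le t<T_{i+1}\}$, $\mathbb I^M_t=\mathbf 1_{A^M_t}$, $\mathbb I^M_{t-}=\mathbf 1_{A^M_{t-}}$. Conditional distributions: for $M\in\mathcal M$, $I\in\mathcal N$, $P_{M,R_I}$ is a fixed regular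 version of $P(\cdot\mid Z_M,R_I)$ and $\mathbb E_{M,R_I}[\xi]=\int\xi\,dP_{M,R_I}$; $P_M:=P_{M,R_\emptyset}$ (a version of $P(\cdot\mid Z_M)$) and $\mathbb E_M$ its expectation. *)

theory Defs
  imports "HOL-Probability.Probability"
begin

text \<open>Indices are 1-based as in the paper: the index set \<open>\<nat>\<close> of the paper is
  \<open>{1..}\<close>; the values of \<open>T 0\<close>, \<open>Z 0\<close> are never used.\<close>

definition idxN :: "nat set set" where
  "idxN = {I. finite I \<and> 0 \<notin> I}"

definition idxM :: "nat set set" where
  "idxM = {M. finite M \<and> M \<subseteq> {i. odd i}}"

definition ZI :: "(nat \<Rightarrow> 'w \<Rightarrow> 'e) \<Rightarrow> nat set \<Rightarrow> 'w \<Rightarrow> (nat \<Rightarrow> 'e)" where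
  "ZI Z I \<omega> = restrict (\<lambda>i. Z i \<omega>) I"

definition EI :: "nat set \<Rightarrow> (nat \<Rightarrow> 'e::topological_space) measure" where
  "EI I = PiM I (\<lambda>_. borel)"

text \<open>The random counting measure on rectangles:
  \<open>\<mu>_I([0,t] \<times> B)\<close>.\<close>
definition muI :: "(nat \<Rightarrow> 'w \<Rightarrow> ennreal) \<Rightarrow> (nat \<Rightarrow> 'w \<Rightarrow> 'e) \<Rightarrow> nat set
    \<Rightarrow> 'w \<Rightarrow> real \<Rightarrow> (nat \<Rightarrow> 'e) set \<Rightarrow> real" where
  "muI T Z I \<omega> t B =
     (if (\<forall>i\<in>I. \<forall>j\<in>I. T i \<omega> \<le> ennreal t \<and> T i \<omega> = T j \<omega>)
       \<and> (\<forall>i\<in>I. \<forall>j. 1 \<le> j \<and> j \<notin> I \<longrightarrow> T i \<omega> \<noteq> T j \<omega>)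
       \<and> ZI Z I \<omega> \<in> B then 1 else 0)"

definition QI :: "(nat \<Rightarrow> 'w \<Rightarrow> ennreal) \<Rightarrow> (nat \<Rightarrow> 'w \<Rightarrow> 'e::topological_space) \<Rightarrow> nat set
    \<Rightarrow> 'w \<Rightarrow> ennreal" where
  "QI T Z I \<omega> = Sup (ennreal ` {t. 0 \<le> t \<and> muI T Z I \<omega> t (space (EI I)) = 0})"

definition RI :: "(nat \<Rightarrow> 'w \<Rightarrow> ennreal) \<Rightarrow> (nat \<Rightarrow> 'w \<Rightarrow> 'e::topological_space) \<Rightarrow> nat set
    \<Rightarrow> 'w \<Rightarrow> ennreal \<times> (nat \<Rightarrow> 'e)" where
  "RI T Z I \<omega> = (QI T Z I \<omega>, ZI Z I \<omega>)"

definition RI_space :: "nat set \<Rightarrow> (ennreal \<times> (nat \<Rightarrow> 'e::topological_space)) measure" where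
  "RI_space I = borel \<Otimes>\<^sub>M EI I"

definition sigmaRV :: "'w measure \<Rightarrow> ('w \<Rightarrow> 'b) \<Rightarrow> 'b measure \<Rightarrow> 'w measure" where
  "sigmaRV P X N = vimage_algebra (space P) X N"

definition Gt_gen :: "'w measure \<Rightarrow> (nat \<Rightarrow> 'w \<Rightarrow> ennreal) \<Rightarrow> (nat \<Rightarrow> 'w \<Rightarrow> 'e::topological_space)
    \<Rightarrow> real \<Rightarrow> 'w set set" where
  "Gt_gen P T Z t = {{\<omega> \<in> space P. T (2*i-1) \<omega> \<le> ennreal t \<and> ennreal t < T (2*i) \<omega> \<and> Z (2*i) \<omega> \<in> B}
       | i B. 1 \<le> i \<and> B \<in> sets (borel :: 'e measure)}"

definition Gtm_gen :: "'w measure \<Rightarrow> (nat \<Rightarrow> 'w \<Rightarrow> ennreal) \<Rightarrow> (nat \<Rightarrow> 'w \<Rightarrow> 'e::topological_space)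
    \<Rightarrow> real \<Rightarrow> 'w set set" where
  "Gtm_gen P T Z t = {{\<omega> \<in> space P. T (2*i-1) \<omega> < ennreal t \<and> ennreal t \<le> T (2*i) \<omega> \<and> Z (2*i) \<omega> \<in> B}
       | i B. 1 \<le> i \<and> B \<in> sets (borel :: 'e measure)}"

definition G_RI :: "'w measure \<Rightarrow> (nat \<Rightarrow> 'w \<Rightarrow> ennreal) \<Rightarrow> (nat \<Rightarrow> 'w \<Rightarrow> 'e::topological_space)
    \<Rightarrow> nat set \<Rightarrow> real \<Rightarrow> 'w measure" where
  "G_RI P T Z I t = sigma (space P)
     (Gt_gen P T Z t \<union> null_sets P \<union> sets (sigmaRV P (RI T Z I) (RI_space I)))"

definition Gm_RI :: "'w measure \<Rightarrow> (nat \<Rightarrow> 'w \<Rightarrow> ennreal) \<Rightarrow> (nat \<Rightarrow> 'w \<Rightarrow> 'e::topological_space)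
    \<Rightarrow> nat set \<Rightarrow> real \<Rightarrow> 'w measure" where
  "Gm_RI P T Z I t = sigma (space P)
     (Gtm_gen P T Z t \<union> null_sets P \<union> sets (sigmaRV P (RI T Z I) (RI_space I)))"

definition AM :: "'w measure \<Rightarrow> (nat \<Rightarrow> 'w \<Rightarrow> ennreal) \<Rightarrow> nat set \<Rightarrow> real \<Rightarrow> 'w set" where
  "AM P T M t = {\<omega> \<in> space P.
      (\<forall>i\<in>M. T i \<omega> \<le> ennreal t \<and> ennreal t < T (i+1) \<omega>) \<and>
      (\<forall>i. odd i \<and> i \<notin> M \<longrightarrow> \<not> (T i \<omega> \<le> ennreal t \<and> ennreal t < T (i+1) \<omega>))}"

definition AMm :: "'w measure \<Rightarrow> (nat \<Rightarrow> 'w \<Rightarrow> ennreal) \<Rightarrow> nat set \<Rightarrow> real \<Rightarrow> 'w set" where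
  "AMm P T M t = {\<omega> \<in> space P.
      (\<forall>i\<in>M. T i \<omega> < ennreal t \<and> ennreal t \<le> T (i+1) \<omega>) \<and>
      (\<forall>i. odd i \<and> i \<notin> M \<longrightarrow> \<not> (T i \<omega> < ennreal t \<and> ennreal t \<le> T (i+1) \<omega>))}"

definition regular_cond_prob :: "'w measure \<Rightarrow> ('w \<Rightarrow> 'b) \<Rightarrow> 'b measure \<Rightarrow> ('w \<Rightarrow> 'w measure) \<Rightarrow> bool" where
  "regular_cond_prob P X N K \<longleftrightarrow>
     (\<forall>\<omega>\<in>space P. prob_space (K \<omega>) \<and> sets (K \<omega>) = sets P) \<and>
     (\<forall>A\<in>sets P. (\<lambda>\<omega>. emeasure (K \<omega>) A) \<in> borel_measurable (sigmaRV P X N) \<and>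
        (\<forall>C\<in>sets (sigmaRV P X N).
           (\<integral>\<^sup>+\<omega>. emeasure (K \<omega>) A * indicator C \<omega> \<partial>P) = emeasure P (A \<inter> C)))"

definition ZM_RI :: "(nat \<Rightarrow> 'w \<Rightarrow> ennreal) \<Rightarrow> (nat \<Rightarrow> 'w \<Rightarrow> 'e::topological_space) \<Rightarrow> nat set \<Rightarrow> nat set
    \<Rightarrow> 'w \<Rightarrow> (nat \<Rightarrow> 'e) \<times> (ennreal \<times> (nat \<Rightarrow> 'e))" where
  "ZM_RI T Z M I \<omega> = (ZI Z M \<omega>, RI T Z I \<omega>)"

definition ZM_RI_space :: "nat set \<Rightarrow> nat set \<Rightarrow> ((nat \<Rightarrow> 'e::topological_space) \<times> (ennreal \<times> (nat \<Rightarrow> 'e))) measure" where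
  "ZM_RI_space M I = EI M \<Otimes>\<^sub>M RI_space I"

end

theory Submission
  imports Defs
begin

text \<open>On the event \<open>A = A^M_t\<close>, where exactly the pairs with odd index in \<open>M\<close> are active, the
  information \<open>G_t \<or> \<sigma>(R_I)\<close> coincides up to null sets with \<open>\<sigma>(Z_M, R_I)\<close>: a generator
  \<open>{T_(2i-1) \<le> t < T_(2i), Z_(2i) \<in> B}\<close> meets \<open>A\<close> in \<open>{Z_(2i-1) \<in> B} \<inter> A\<close> if \<open>2i-1 \<in> M\<close> and is
  disjoint from \<open>A\<close> otherwise, while conversely \<open>Z_M\<close> is \<open>G_t\<close>-measurable on \<open>A\<close>. So on \<open>A\<close>
  the conditional expectation is the elementary ratio \<open>E[\<xi> 1_A | Z_M, R_I] / P(A | Z_M, R_I)\<close>,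
  computed with the regular conditional distribution. For \<open>\<xi> \<ge> 0\<close> this is checked against the
  defining property of conditional expectation via the disintegration identity
  \<open>\<integral>(\<integral>u dK_\<omega>) \<phi> dP = \<integral>u \<phi> dP\<close> for \<open>\<sigma>(Z_M, R_I)\<close>-measurable \<open>\<phi>\<close>; the general case follows by
  splitting \<open>\<xi>\<close> into its positive and negative parts.\<close>

text \<open>No assumption on \<open>b \<noteq> 0\<close> is needed: \<open>a / 0 \<in> {0, \<infinity>}\<close> and \<open>enn2real \<infinity> = 0 = x / 0\<close>.\<close>
lemma enn2real_divide:
  fixes a b :: ennreal
  assumes "b \<noteq> \<top>"
  shows "enn2real (a / b) = enn2real a / enn2real b"
proof (cases "b = 0")
  case True
  then show ?thesis by simp
next
  case False
  with assms obtain r where b: "b = ennreal r" "0 < r"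
    by (cases b) (auto simp: ennreal_less_zero_iff)
  then show ?thesis
    by (cases a) (simp_all add: divide_ennreal ennreal_top_divide)
qed

lemma sigma_sets_AE_trace:
  assumes S: "S \<in> sigma_sets \<Omega> G" and space_H: "space H = \<Omega>" and A: "A \<subseteq> \<Omega>"
    and generators: "\<And>S. S \<in> G \<Longrightarrow> \<exists>S'\<in>sets H. AE \<omega> in M. (\<omega> \<in> S \<inter> A) = (\<omega> \<in> S' \<inter> A)"
  shows "\<exists>S'\<in>sets H. AE \<omega> in M. (\<omega> \<in> S \<inter> A) = (\<omega> \<in> S' \<inter> A)"
  using S
proof induction
  case (Basic S)
  then show ?case by (rule generators)
next
  case Empty
  show ?case by (intro bexI[of _ "{}"]) auto
next
  case (Compl S)
  then obtain S' where "S' \<in> sets H" "AE \<omega> in M. (\<omega> \<in> S \<inter> A) = (\<omega> \<in> S' \<inter> A)" by blast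
  then show ?case
    using A by (intro bexI[of _ "\<Omega> - S'"]) (auto elim!: eventually_mono simp flip: space_H)
next
  case (Union S)
  then obtain S' where "\<And>i. S' i \<in> sets H" "\<And>i. AE \<omega> in M. (\<omega> \<in> S i \<inter> A) = (\<omega> \<in> S' i \<inter> A)"
    by metis
  moreover from this(2) have "AE \<omega> in M. \<forall>i. (\<omega> \<in> S i \<inter> A) = (\<omega> \<in> S' i \<inter> A)"
    by (simp add: AE_all_countable)
  ultimately show ?case
    by (intro bexI[of _ "\<Union>i. S' i"]) (auto elim!: eventually_mono)
qed

locale regular_cond_kernel =
  fixes P H :: "'w measure" and K :: "'w \<Rightarrow> 'w measure"
  assumes prob_space_P: "prob_space P"
    and space_H: "space H = space P" and sets_H: "sets H \<subseteq> sets P"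
    and prob_space_K: "\<And>\<omega>. \<omega> \<in> space P \<Longrightarrow> prob_space (K \<omega>)"
    and sets_K: "\<And>\<omega>. \<omega> \<in> space P \<Longrightarrow> sets (K \<omega>) = sets P"
    and emeasure_K_measurable: "\<And>B. B \<in> sets P \<Longrightarrow> (\<lambda>\<omega>. emeasure (K \<omega>) B) \<in> borel_measurable H"
    and nn_integral_emeasure_K: "\<And>B C. B \<in> sets P \<Longrightarrow> C \<in> sets H \<Longrightarrow>
      (\<integral>\<^sup>+\<omega>. emeasure (K \<omega>) B * indicator C \<omega> \<partial>P) = emeasure P (B \<inter> C)"
begin

lemma subalgebra_H: "subalgebra P H"
  using space_H sets_H by (simp add: subalgebra_def)

lemma measurable_H_imp_P: "f \<in> measurable H N \<Longrightarrow> f \<in> measurable P N"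
  using measurable_from_subalg[OF subalgebra_H] .

lemma K_measurable: "K \<in> measurable H (subprob_algebra P)"
  by (rule measurable_subprob_algebra)
    (auto simp: space_H prob_space_K sets_K prob_space_imp_subprob_space emeasure_K_measurable)

lemma nn_integral_K_measurable:
  "u \<in> borel_measurable P \<Longrightarrow> (\<lambda>\<omega>. \<integral>\<^sup>+x. u x \<partial>K \<omega>) \<in> borel_measurable H"
  using measurable_compose[OF K_measurable nn_integral_measurable_subprob_algebra] by simp

lemma nn_integral_K_mult_indicator:
  assumes u: "u \<in> borel_measurable P" and C: "C \<in> sets H"
  shows "(\<integral>\<^sup>+\<omega>. (\<integral>\<^sup>+x. u x \<partial>K \<omega>) * indicator C \<omega> \<partial>P) = (\<integral>\<^sup>+\<omega>. u \<omega> * indicator C \<omega> \<partial>P)"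
proof -
  let ?R = "restr_to_subalg P H"
  let ?N = "density ?R (indicator C)"
  have sets_R: "sets ?R = sets H"
    by (simp add: sets_restr_to_subalg[OF subalgebra_H])
  have R_measurable: "f \<in> borel_measurable H \<Longrightarrow> f \<in> borel_measurable ?R" for f :: "'w \<Rightarrow> ennreal"
    by (simp add: measurable_cong_sets[OF sets_R refl])
  have K_N: "K \<in> measurable ?N (subprob_algebra P)"
    using K_measurable by (simp add: measurable_cong_sets[OF sets_R refl])
  have N_nonempty: "space ?N \<noteq> {}"
    using prob_space.not_empty[OF prob_space_P] by (simp add: space_restr_to_subalg)
  have C_P[measurable]: "C \<in> sets P" and [measurable]: "C \<in> sets H" using C sets_H by auto
  \<comment> \<open>mixing the kernel over \<open>P\<close> restricted to \<open>C \<in> H\<close> gives back \<open>P\<close> restricted to \<open>C\<close>\<close>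
  have mixture: "?N \<bind> K = density P (indicator C)"
  proof (rule measure_eqI)
    show sets_eq: "sets (?N \<bind> K) = sets (density P (indicator C))"
      using sets_bind_measurable[OF K_N N_nonempty] by simp
    fix B assume "B \<in> sets (?N \<bind> K)"
    then have B[measurable]: "B \<in> sets P" using sets_eq by simp
    have "emeasure (?N \<bind> K) B = (\<integral>\<^sup>+\<omega>. indicator C \<omega> * emeasure (K \<omega>) B \<partial>?R)"
      by (simp add: emeasure_bind[OF N_nonempty K_N B] nn_integral_density
          R_measurable emeasure_K_measurable)
    also have "\<dots> = (\<integral>\<^sup>+\<omega>. emeasure (K \<omega>) B * indicator C \<omega> \<partial>P)"
      using emeasure_K_measurable[OF B]
      by (simp add: nn_integral_subalgebra2[OF subalgebra_H] mult.commute)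
    also have "\<dots> = emeasure P (C \<inter> B)"
      by (simp add: nn_integral_emeasure_K[OF B C] Int_commute)
    finally show "emeasure (?N \<bind> K) B = emeasure (density P (indicator C)) B"
      by (simp add: emeasure_restricted)
  qed
  have "(\<integral>\<^sup>+\<omega>. u \<omega> * indicator C \<omega> \<partial>P) = (\<integral>\<^sup>+\<omega>. u \<omega> \<partial>(?N \<bind> K))"
    using u by (simp add: mixture nn_integral_density mult.commute)
  also have "\<dots> = (\<integral>\<^sup>+\<omega>. indicator C \<omega> * (\<integral>\<^sup>+x. u x \<partial>K \<omega>) \<partial>?R)"
    using u by (simp add: nn_integral_bind[OF _ K_N] nn_integral_density
        R_measurable nn_integral_K_measurable)
  also have "\<dots> = (\<integral>\<^sup>+\<omega>. (\<integral>\<^sup>+x. u x \<partial>K \<omega>) * indicator C \<omega> \<partial>P)"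
    using nn_integral_K_measurable[OF u]
    by (simp add: nn_integral_subalgebra2[OF subalgebra_H] mult.commute)
  finally show ?thesis ..
qed

lemma nn_integral_K_mult:
  assumes u[measurable]: "u \<in> borel_measurable P" and \<phi>: "\<phi> \<in> borel_measurable H"
  shows "(\<integral>\<^sup>+\<omega>. (\<integral>\<^sup>+x. u x \<partial>K \<omega>) * \<phi> \<omega> \<partial>P) = (\<integral>\<^sup>+\<omega>. u \<omega> * \<phi> \<omega> \<partial>P)"
proof -
  have [measurable]: "(\<lambda>\<omega>. \<integral>\<^sup>+x. u x \<partial>K \<omega>) \<in> borel_measurable P"
    using nn_integral_K_measurable[OF u] by (rule measurable_H_imp_P)
  show ?thesis
    using \<phi>
  proof (induction rule: borel_measurable_induct)
    case (cong f g)
    then show ?case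
      by (simp add: space_H cong: nn_integral_cong)
  next
    case (set C)
    then show ?case by (rule nn_integral_K_mult_indicator[OF u])
  next
    case (mult v c)
    then have [measurable]: "v \<in> borel_measurable P" by (auto intro: measurable_H_imp_P)
    show ?case
      using mult by (simp add: nn_integral_cmult mult.left_commute)
  next
    case (add v w)
    then have [measurable]: "v \<in> borel_measurable P" "w \<in> borel_measurable P"
      by (auto intro: measurable_H_imp_P)
    show ?case
      using add by (simp add: distrib_left nn_integral_add)
  next
    case (seq U)
    then have [measurable]: "U i \<in> borel_measurable P" for i
      by (auto intro: measurable_H_imp_P)
    have mono: "incseq (\<lambda>i \<omega>. f \<omega> * U i \<omega>)" for f :: "'w \<Rightarrow> ennreal"
      using \<open>incseq U\<close> by (auto simp: incseq_def le_fun_def intro: mult_left_mono)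
    have "(\<integral>\<^sup>+\<omega>. (\<integral>\<^sup>+x. u x \<partial>K \<omega>) * (SUP i. U i \<omega>) \<partial>P)
        = (SUP i. \<integral>\<^sup>+\<omega>. (\<integral>\<^sup>+x. u x \<partial>K \<omega>) * U i \<omega> \<partial>P)"
      by (simp add: SUP_mult_left_ennreal nn_integral_monotone_convergence_SUP[OF mono])
    also have "\<dots> = (SUP i. \<integral>\<^sup>+\<omega>. u \<omega> * U i \<omega> \<partial>P)"
      using seq.IH by simp
    also have "\<dots> = (\<integral>\<^sup>+\<omega>. u \<omega> * (SUP i. U i \<omega>) \<partial>P)"
      by (simp add: SUP_mult_left_ennreal nn_integral_monotone_convergence_SUP[OF mono])
    finally show ?case by (simp add: image_comp)
  qed
qed

lemma AE_integrable_K: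
  fixes u :: "'w \<Rightarrow> real"
  assumes u: "integrable P u"
  shows "AE \<omega> in P. integrable (K \<omega>) u"
proof -
  have [measurable]: "u \<in> borel_measurable P" using u by simp
  have "(\<integral>\<^sup>+\<omega>. (\<integral>\<^sup>+x. norm (u x) \<partial>K \<omega>) \<partial>P) = (\<integral>\<^sup>+x. norm (u x) \<partial>P)"
    using nn_integral_K_mult[of "\<lambda>x. ennreal (norm (u x))" "\<lambda>_. 1"] by simp
  also have "\<dots> < \<infinity>" using u by (simp add: integrable_iff_bounded)
  finally have "AE \<omega> in P. (\<integral>\<^sup>+x. norm (u x) \<partial>K \<omega>) \<noteq> \<infinity>"
    using measurable_H_imp_P[OF nn_integral_K_measurable, of "\<lambda>x. ennreal (norm (u x))"]
    by (intro nn_integral_PInf_AE) auto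
  with AE_space show ?thesis
  proof eventually_elim
    case (elim \<omega>)
    then show "integrable (K \<omega>) u"
      by (simp add: integrable_iff_bounded measurable_cong_sets[OF sets_K refl] top.not_eq_extremum)
qed
qed

text \<open>\<open>cond_mean u A \<omega>\<close> is the paper's \<open>E_{M,R_I}[u 1_A] / E_{M,R_I}[1_A]\<close>, with \<open>K \<omega>\<close> in the
  role of \<open>P_{M,R_I}\<close>.\<close>
definition cond_mean :: "('w \<Rightarrow> ennreal) \<Rightarrow> 'w set \<Rightarrow> 'w \<Rightarrow> ennreal" where
  "cond_mean u A \<omega> = (\<integral>\<^sup>+x. u x * indicator A x \<partial>K \<omega>) / emeasure (K \<omega>) A"

lemma cond_mean_measurable:
  assumes [measurable]: "u \<in> borel_measurable P" "A \<in> sets P"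
  shows "cond_mean u A \<in> borel_measurable H"
  unfolding cond_mean_def[abs_def]
  using nn_integral_K_measurable[of "\<lambda>x. u x * indicator A x"] emeasure_K_measurable[of A]
  by measurable

lemma emeasure_K_mult_cond_mean:
  assumes "\<omega> \<in> space P" and A: "A \<in> sets P"
  shows "emeasure (K \<omega>) A * cond_mean u A \<omega> = (\<integral>\<^sup>+x. u x * indicator A x \<partial>K \<omega>)"
proof (cases "emeasure (K \<omega>) A = 0")
  case True
  then have "A \<in> null_sets (K \<omega>)"
    using assms sets_K by (auto intro: null_setsI)
  then show ?thesis by (simp add: True nn_integral_null_set)
next
  case False
  moreover have "emeasure (K \<omega>) A \<noteq> \<top>"
    using assms prob_space_K by (simp add: prob_space_def finite_measure.emeasure_finite)
  ultimately show ?thesis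
    by (simp add: cond_mean_def ennreal_times_divide mult.commute[of "emeasure (K \<omega>) A"]
        ennreal_mult_divide_eq)
qed

lemma enn2real_cond_mean:
  assumes \<omega>: "\<omega> \<in> space P" and "A \<in> sets P"
    and \<xi>: "\<xi> \<in> borel_measurable P" and nonneg: "\<And>x. 0 \<le> \<xi> x"
  shows "enn2real (cond_mean (\<lambda>x. ennreal (\<xi> x)) A \<omega>)
    = (\<integral>x. \<xi> x * indicator A x \<partial>K \<omega>) / measure (K \<omega>) A"
proof -
  have "emeasure (K \<omega>) A \<noteq> \<top>"
    using \<omega> prob_space_K by (simp add: prob_space_def finite_measure.emeasure_finite)
  moreover have "(\<integral>x. \<xi> x * indicator A x \<partial>K \<omega>) = enn2real (\<integral>\<^sup>+x. ennreal (\<xi> x) * indicator A x \<partial>K \<omega>)"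
    using nonneg assms
    by (simp add: integral_eq_nn_integral measurable_cong_sets[OF sets_K[OF \<omega>] refl])
      (auto intro!: arg_cong[where f = enn2real] nn_integral_cong split: split_indicator)
  ultimately show ?thesis
    by (simp add: cond_mean_def enn2real_divide measure_def)
qed

lemma nn_integral_indicator_cond_mean:
  assumes A[measurable]: "A \<in> sets P" and u[measurable]: "u \<in> borel_measurable P"
    and \<phi>: "\<phi> \<in> borel_measurable H"
  shows "(\<integral>\<^sup>+\<omega>. indicator A \<omega> * cond_mean u A \<omega> * \<phi> \<omega> \<partial>P) = (\<integral>\<^sup>+\<omega>. u \<omega> * indicator A \<omega> * \<phi> \<omega> \<partial>P)"
proof -
  have "(\<integral>\<^sup>+\<omega>. indicator A \<omega> * cond_mean u A \<omega> * \<phi> \<omega> \<partial>P)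
      = (\<integral>\<^sup>+\<omega>. (\<integral>\<^sup>+x. indicator A x \<partial>K \<omega>) * (cond_mean u A \<omega> * \<phi> \<omega>) \<partial>P)"
    using cond_mean_measurable[OF u A] \<phi>
    by (simp add: nn_integral_K_mult mult.assoc)
  also have "\<dots> = (\<integral>\<^sup>+\<omega>. (\<integral>\<^sup>+x. u x * indicator A x \<partial>K \<omega>) * \<phi> \<omega> \<partial>P)"
    using sets_K by (intro nn_integral_cong)
      (simp add: emeasure_K_mult_cond_mean mult.assoc[symmetric])
  also have "\<dots> = (\<integral>\<^sup>+\<omega>. u \<omega> * indicator A \<omega> * \<phi> \<omega> \<partial>P)"
    using \<phi> by (simp add: nn_integral_K_mult)
  finally show ?thesis .
qed

lemma nn_integral_indicator_cond_mean_finite: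
  assumes A[measurable]: "A \<in> sets P" and \<xi>: "integrable P \<xi>" and nonneg: "\<And>x. 0 \<le> \<xi> x"
  shows "(\<integral>\<^sup>+\<omega>. indicator A \<omega> * cond_mean (\<lambda>x. ennreal (\<xi> x)) A \<omega> \<partial>P) < \<infinity>"
proof -
  have [measurable]: "\<xi> \<in> borel_measurable P" using \<xi> by simp
  have "(\<integral>\<^sup>+\<omega>. indicator A \<omega> * cond_mean (\<lambda>x. ennreal (\<xi> x)) A \<omega> \<partial>P)
      = (\<integral>\<^sup>+\<omega>. ennreal (\<xi> \<omega>) * indicator A \<omega> \<partial>P)"
    using nn_integral_indicator_cond_mean[of A "\<lambda>x. ennreal (\<xi> x)" "\<lambda>_. 1"] by simp
  also have "\<dots> \<le> (\<integral>\<^sup>+\<omega>. ennreal (\<xi> \<omega>) \<partial>P)"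
    by (intro nn_integral_mono) (simp split: split_indicator)
  also have "\<dots> < \<infinity>"
    using \<xi> nonneg by (simp add: integrable_iff_bounded)
  finally show ?thesis .
qed

lemma AE_ennreal_enn2real_cond_mean:
  assumes A[measurable]: "A \<in> sets P" and \<xi>: "integrable P \<xi>" and nonneg: "\<And>x. 0 \<le> \<xi> x"
  shows "AE \<omega> in P. ennreal (indicator A \<omega> * enn2real (cond_mean (\<lambda>x. ennreal (\<xi> x)) A \<omega>))
    = indicator A \<omega> * cond_mean (\<lambda>x. ennreal (\<xi> x)) A \<omega>"
proof -
  have "cond_mean (\<lambda>x. ennreal (\<xi> x)) A \<in> borel_measurable P"
    using \<xi> by (auto intro!: measurable_H_imp_P[OF cond_mean_measurable])
  then have "AE \<omega> in P. indicator A \<omega> * cond_mean (\<lambda>x. ennreal (\<xi> x)) A \<omega> \<noteq> \<infinity>"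
    using nn_integral_indicator_cond_mean_finite[OF A \<xi> nonneg] by (intro nn_integral_PInf_AE) auto
  then show ?thesis
    by (elim eventually_mono) (auto simp: ennreal_enn2real_if split: split_indicator)
qed

end

locale trace_on_event = regular_cond_kernel +
  fixes F A
  assumes subalgebra_F: "subalgebra (completion P) F"
    and A_in_F: "A \<in> sets F" and A_in_P: "A \<in> sets P"
    and trace_F_in_H: "\<And>S. S \<in> sets F \<Longrightarrow>
      \<exists>S'\<in>sets H. AE \<omega> in completion P. (\<omega> \<in> S \<inter> A) = (\<omega> \<in> S' \<inter> A)"
    and trace_H_in_F: "\<And>S'. S' \<in> sets H \<Longrightarrow> A \<inter> S' \<in> sets F"
begin

lemma space_F: "space F = space P"
  using subalgebra_F by (simp add: subalgebra_def)

lemma sigma_finite_subalgebra_F: "sigma_finite_subalgebra (completion P) F"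
proof -
  interpret completion: prob_space "completion P"
    using prob_space.prob_space_completion[OF prob_space_P] .
  show ?thesis
    by (rule finite_measure_subalgebra_is_sigma_finite)
      (simp add: finite_measure_subalgebra_def finite_measure_subalgebra_axioms_def subalgebra_F
        completion.finite_measure_axioms)
qed

lemma measurable_indicator_mult:
  assumes \<phi>: "\<phi> \<in> borel_measurable H"
  shows "(\<lambda>\<omega>. indicator A \<omega> * \<phi> \<omega> :: real) \<in> borel_measurable F"
proof (rule measurableI)
  fix B :: "real set" assume B: "B \<in> sets borel"
  have "(\<lambda>\<omega>. indicator A \<omega> * \<phi> \<omega>) -` B \<inter> space F
      = (A \<inter> (\<phi> -` B \<inter> space H)) \<union> (if 0 \<in> B then space F - A else {})"
    using sets.sets_into_space[OF A_in_P]
    by (auto simp: space_F space_H indicator_def of_bool_def split: if_split_asm)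
  also have "\<dots> \<in> sets F"
    using trace_H_in_F[OF measurable_sets[OF \<phi> B]] A_in_F by auto
  finally show "(\<lambda>\<omega>. indicator A \<omega> * \<phi> \<omega>) -` B \<inter> space F \<in> sets F" .
qed auto

lemma nn_integral_cond_mean_F:
  assumes u[measurable]: "u \<in> borel_measurable P" and S: "S \<in> sets F"
  shows "(\<integral>\<^sup>+\<omega>. indicator A \<omega> * cond_mean u A \<omega> * indicator S \<omega> \<partial>completion P)
       = (\<integral>\<^sup>+\<omega>. u \<omega> * indicator A \<omega> * indicator S \<omega> \<partial>completion P)"
proof -
  obtain S' where S': "S' \<in> sets H"
    and trace: "AE \<omega> in completion P. (\<omega> \<in> S \<inter> A) = (\<omega> \<in> S' \<inter> A)"
    using trace_F_in_H[OF S] by blast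
  have [measurable]: "S' \<in> sets P" using S' sets_H by auto
  have "(\<integral>\<^sup>+\<omega>. indicator A \<omega> * cond_mean u A \<omega> * indicator S \<omega> \<partial>completion P)
      = (\<integral>\<^sup>+\<omega>. indicator A \<omega> * cond_mean u A \<omega> * indicator S' \<omega> \<partial>P)"
    using trace by (subst nn_integral_completion[symmetric], intro nn_integral_cong_AE)
      (auto elim!: eventually_mono split: split_indicator)
  also have "\<dots> = (\<integral>\<^sup>+\<omega>. u \<omega> * indicator A \<omega> * indicator S' \<omega> \<partial>P)"
    using S' by (intro nn_integral_indicator_cond_mean A_in_P) auto
  also have "\<dots> = (\<integral>\<^sup>+\<omega>. u \<omega> * indicator A \<omega> * indicator S \<omega> \<partial>completion P)"
    using trace by (subst nn_integral_completion[symmetric], intro nn_integral_cong_AE)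
      (auto elim!: eventually_mono split: split_indicator)
  finally show ?thesis .
qed

lemma set_integral_cond_mean:
  fixes \<xi> :: "_ \<Rightarrow> real"
  assumes \<xi>[measurable]: "\<xi> \<in> borel_measurable P" and nonneg: "\<And>x. 0 \<le> \<xi> x"
    and integrable: "integrable P \<xi>" and S: "S \<in> sets F"
  defines "f \<equiv> \<lambda>\<omega>. indicator A \<omega> * enn2real (cond_mean (\<lambda>x. ennreal (\<xi> x)) A \<omega>)"
  shows "(\<integral>x\<in>S. \<xi> x * indicator A x \<partial>completion P) = (\<integral>x\<in>S. f x \<partial>completion P)"
proof -
  let ?c = "cond_mean (\<lambda>x. ennreal (\<xi> x)) A"
  have [measurable]: "A \<in> sets P" "S \<in> sets (completion P)"
    using A_in_P S subalgebra_F by (auto simp: subalgebra_def)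
  have "?c \<in> borel_measurable P"
    by (auto intro!: measurable_H_imp_P[OF cond_mean_measurable])
  then have [measurable]: "\<xi> \<in> borel_measurable (completion P)" "f \<in> borel_measurable (completion P)"
    "A \<in> sets (completion P)"
    by (simp_all add: f_def measurable_completion)
  have "(\<integral>\<^sup>+x. ennreal (indicator S x * (\<xi> x * indicator A x)) \<partial>completion P)
      = (\<integral>\<^sup>+x. ennreal (\<xi> x) * indicator A x * indicator S x \<partial>completion P)"
    by (intro nn_integral_cong) (simp split: split_indicator)
  also have "\<dots> = (\<integral>\<^sup>+x. indicator A x * ?c x * indicator S x \<partial>completion P)"
    by (rule nn_integral_cond_mean_F[OF _ S, symmetric]) simp
  also have "\<dots> = (\<integral>\<^sup>+x. ennreal (indicator S x * f x) \<partial>completion P)"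
    using AE_completion[OF AE_ennreal_enn2real_cond_mean[OF A_in_P integrable nonneg]]
    by (intro nn_integral_cong_AE) (auto simp: f_def elim!: eventually_mono split: split_indicator)
  moreover have "0 \<le> f x" for x
    by (simp add: f_def)
  ultimately show ?thesis
    using nonneg unfolding set_lebesgue_integral_def
    by (simp add: integral_eq_nn_integral)
qed

lemma real_cond_exp_mult_indicator_nonneg:
  fixes \<xi> :: "_ \<Rightarrow> real"
  assumes \<xi>[measurable]: "\<xi> \<in> borel_measurable P" and nonneg: "\<And>x. 0 \<le> \<xi> x"
    and integrable: "integrable P \<xi>"
  shows "AE \<omega> in completion P. real_cond_exp (completion P) F (\<lambda>x. \<xi> x * indicator A x) \<omega>
    = indicator A \<omega> * ((\<integral>x. \<xi> x * indicator A x \<partial>K \<omega>) / measure (K \<omega>) A)"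
proof -
  interpret sigma_finite_subalgebra "completion P" F by (rule sigma_finite_subalgebra_F)
  let ?c = "cond_mean (\<lambda>x. ennreal (\<xi> x)) A"
  define f where "f \<omega> = indicator A \<omega> * enn2real (?c \<omega>)" for \<omega>
  have c_H: "?c \<in> borel_measurable H" using A_in_P by (intro cond_mean_measurable) auto
  then have f_F: "f \<in> borel_measurable F"
    unfolding f_def by (intro measurable_indicator_mult borel_measurable_enn2real)
  have [measurable]: "?c \<in> borel_measurable P" using c_H by (rule measurable_H_imp_P)
  have [measurable]: "f \<in> borel_measurable P" using A_in_P unfolding f_def by measurable
  have "(\<integral>\<^sup>+x. ennreal (norm (f x)) \<partial>P) = (\<integral>\<^sup>+\<omega>. indicator A \<omega> * ?c \<omega> \<partial>P)"
    using AE_ennreal_enn2real_cond_mean[OF A_in_P integrable nonneg]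
    by (intro nn_integral_cong_AE) (auto simp: f_def)
  then have "integrable (completion P) f"
    using nn_integral_indicator_cond_mean_finite[OF A_in_P integrable nonneg]
    by (simp add: integrable_completion integrableI_bounded)
  moreover have "integrable (completion P) (\<lambda>x. \<xi> x * indicator A x)"
    using integrable A_in_P by (simp add: integrable_completion integrable_real_mult_indicator)
  ultimately have "AE \<omega> in completion P. real_cond_exp (completion P) F (\<lambda>x. \<xi> x * indicator A x) \<omega> = f \<omega>"
    using f_F set_integral_cond_mean[OF \<xi> nonneg integrable] unfolding f_def
    by (intro real_cond_exp_charact) auto
  with AE_space show ?thesis
    by eventually_elim (simp add: f_def enn2real_cond_mean nonneg A_in_P)
qed

lemma indicator_mult_real_cond_exp:
  fixes \<xi> :: "_ \<Rightarrow> real"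
  assumes \<xi>[measurable]: "\<xi> \<in> borel_measurable P" and integrable: "integrable (completion P) \<xi>"
  shows "AE \<omega> in completion P. indicator A \<omega> * real_cond_exp (completion P) F \<xi> \<omega>
    = indicator A \<omega> * ((\<integral>x. \<xi> x * indicator A x \<partial>K \<omega>) / measure (K \<omega>) A)"
proof -
  interpret sigma_finite_subalgebra "completion P" F by (rule sigma_finite_subalgebra_F)
  have [measurable]: "A \<in> sets P" "A \<in> sets F" by (rule A_in_P, rule A_in_F)
  have \<xi>_P: "integrable P \<xi>" using integrable by (simp add: integrable_completion)
  define pos where "pos x = max (\<xi> x) 0" for x
  define neg where "neg x = max (- \<xi> x) 0" for x
  have [measurable]: "pos \<in> borel_measurable P" "neg \<in> borel_measurable P"
    unfolding pos_def neg_def by measurable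
  have integrable_parts: "integrable P pos" "integrable P neg"
    unfolding pos_def neg_def using \<xi>_P by (auto intro: integrable_max)
  have parts_nonneg: "0 \<le> pos x" "0 \<le> neg x" for x
    by (simp_all add: pos_def neg_def)
  have split: "\<xi> x * indicator A x = pos x * indicator A x - neg x * indicator A x" for x
    by (simp add: pos_def neg_def max_def)
  have "AE \<omega> in completion P. real_cond_exp (completion P) F (\<lambda>x. indicator A x * \<xi> x) \<omega>
      = indicator A \<omega> * real_cond_exp (completion P) F \<xi> \<omega>"
    using integrable_mult_indicator[of A "completion P" \<xi>] integrable
    by (intro real_cond_exp_mult) (auto simp: measurable_completion)
  moreover have "AE \<omega> in completion P. real_cond_exp (completion P) F (\<lambda>x. \<xi> x * indicator A x) \<omega>
      = real_cond_exp (completion P) F (\<lambda>x. pos x * indicator A x) \<omega>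
        - real_cond_exp (completion P) F (\<lambda>x. neg x * indicator A x) \<omega>"
    unfolding split using integrable_parts
    by (intro real_cond_exp_diff) (auto simp: integrable_completion integrable_real_mult_indicator)
  moreover have "AE \<omega> in completion P. real_cond_exp (completion P) F (\<lambda>x. pos x * indicator A x) \<omega>
      = indicator A \<omega> * ((\<integral>x. pos x * indicator A x \<partial>K \<omega>) / measure (K \<omega>) A)"
    by (rule real_cond_exp_mult_indicator_nonneg) (simp_all add: parts_nonneg integrable_parts)
  moreover have "AE \<omega> in completion P. real_cond_exp (completion P) F (\<lambda>x. neg x * indicator A x) \<omega>
      = indicator A \<omega> * ((\<integral>x. neg x * indicator A x \<partial>K \<omega>) / measure (K \<omega>) A)"
    by (rule real_cond_exp_mult_indicator_nonneg) (simp_all add: parts_nonneg integrable_parts)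
  moreover have "AE \<omega> in completion P. integrable (K \<omega>) (\<lambda>x. pos x * indicator A x)"
    "AE \<omega> in completion P. integrable (K \<omega>) (\<lambda>x. neg x * indicator A x)"
    using integrable_parts
    by (auto intro!: AE_completion AE_integrable_K integrable_real_mult_indicator)
  ultimately show ?thesis
  proof eventually_elim
    case (elim \<omega>)
    then show ?case
      by (simp add: split mult.commute[of _ "\<xi> _"] diff_divide_distrib right_diff_distrib)
  qed
qed

end

lemma Sup_ennreal_less: "Sup (ennreal ` {t. 0 \<le> t \<and> ennreal t < \<tau>}) = \<tau>"
proof (rule antisym)
  show "Sup (ennreal ` {t. 0 \<le> t \<and> ennreal t < \<tau>}) \<le> \<tau>"
    by (rule Sup_least) (auto intro: less_imp_le)
  show "\<tau> \<le> Sup (ennreal ` {t. 0 \<le> t \<and> ennreal t < \<tau>})"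
  proof (rule le_Sup_iff[THEN iffD2], intro allI impI)
    fix y assume "y < \<tau>"
    then obtain z where "y < z" "z < \<tau>" using dense by blast
    then show "\<exists>a\<in>ennreal ` {t. 0 \<le> t \<and> ennreal t < \<tau>}. y < a"
      by (intro bexI[of _ z]) (auto intro!: image_eqI[of _ _ "enn2real z"] simp: ennreal_enn2real_if)
  qed
qed

lemma QI_eq:
  assumes i0: "i0 \<in> I"
  shows "QI T Z I \<omega> =
    (if (\<forall>i\<in>I. T i \<omega> = T i0 \<omega>) \<and> (\<forall>i\<in>I. \<forall>j. 1 \<le> j \<and> j \<notin> I \<longrightarrow> T i \<omega> \<noteq> T j \<omega>)
     then T i0 \<omega> else \<infinity>)"
proof -
  define atom where "atom \<longleftrightarrow>
    (\<forall>i\<in>I. T i \<omega> = T i0 \<omega>) \<and> (\<forall>i\<in>I. \<forall>j. 1 \<le> j \<and> j \<notin> I \<longrightarrow> T i \<omega> \<noteq> T j \<omega>)"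
  have "(\<forall>i\<in>I. \<forall>j\<in>I. T i \<omega> \<le> ennreal t \<and> T i \<omega> = T j \<omega>)
      \<longleftrightarrow> (\<forall>i\<in>I. T i \<omega> = T i0 \<omega>) \<and> T i0 \<omega> \<le> ennreal t" for t
    using i0 by metis
  then have mu: "muI T Z I \<omega> t (space (EI I)) = (if atom \<and> T i0 \<omega> \<le> ennreal t then 1 else 0)" for t
    unfolding muI_def atom_def by (simp add: ZI_def EI_def space_PiM conj_ac)
  have "{t. 0 \<le> t \<and> muI T Z I \<omega> t (space (EI I)) = 0}
      = {t. 0 \<le> t \<and> ennreal t < (if atom then T i0 \<omega> else \<infinity>)}"
    by (auto simp: mu not_le)
  then show ?thesis
    unfolding QI_def atom_def[symmetric] by (simp only: Sup_ennreal_less)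
qed

lemma QI_empty: "QI T Z {} = (\<lambda>_. 0)"
  by (simp add: fun_eq_iff QI_def muI_def ZI_def EI_def space_PiM bot_ennreal)

lemma QI_measurable:
  assumes [measurable]: "\<And>i. T i \<in> borel_measurable P" and "finite I"
  shows "QI T Z I \<in> borel_measurable P"
proof (cases "I = {}")
  case True
  then show ?thesis by (simp add: QI_empty)
next
  case False
  then obtain i0 where "i0 \<in> I" by auto
  then have "QI T Z I = (\<lambda>\<omega>. if (\<forall>i\<in>I. T i \<omega> = T i0 \<omega>)
      \<and> (\<forall>i\<in>I. \<forall>j. 1 \<le> j \<and> j \<notin> I \<longrightarrow> T i \<omega> \<noteq> T j \<omega>) then T i0 \<omega> else \<infinity>)"
    by (simp add: fun_eq_iff QI_eq)
  then show ?thesis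
    using \<open>finite I\<close> by simp
qed

lemma ZI_measurable:
  "(\<And>i. Z i \<in> borel_measurable P) \<Longrightarrow> ZI Z I \<in> measurable P (EI I)"
  unfolding ZI_def[abs_def] EI_def by (rule measurable_restrict)

lemma RI_measurable:
  "(\<And>i. T i \<in> borel_measurable P) \<Longrightarrow> (\<And>i. Z i \<in> borel_measurable P) \<Longrightarrow> finite I \<Longrightarrow>
    RI T Z I \<in> measurable P (RI_space I)"
  unfolding RI_def[abs_def] RI_space_def
  by (intro measurable_Pair QI_measurable ZI_measurable)

lemma ZM_RI_measurable:
  "(\<And>i. T i \<in> borel_measurable P) \<Longrightarrow> (\<And>i. Z i \<in> borel_measurable P) \<Longrightarrow> finite I \<Longrightarrow>
    ZM_RI T Z M I \<in> measurable P (ZM_RI_space M I)"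
  unfolding ZM_RI_def[abs_def] ZM_RI_space_def
  by (intro measurable_Pair RI_measurable ZI_measurable)


lemma odd_pair_generators_eq:
  fixes Z :: "nat \<Rightarrow> 'w \<Rightarrow> 'e::topological_space"
  assumes Z_pair: "\<And>k. 1 \<le> k \<Longrightarrow> Z (2*k-1) = Z (2*k)"
    and q: "\<And>k \<omega>. 1 \<le> k \<Longrightarrow> q' k \<omega> = q (2*k-1) \<omega>"
  shows "{{\<omega> \<in> \<Omega>. q' k \<omega> \<and> Z (2*k) \<omega> \<in> B} | k B. 1 \<le> k \<and> B \<in> sets borel}
    = {{\<omega> \<in> \<Omega>. q i \<omega> \<and> Z i \<omega> \<in> B} | i B. odd i \<and> B \<in> sets (borel :: 'e measure)}"
proof (intro equalityI subsetI)
  fix S assume "S \<in> {{\<omega> \<in> \<Omega>. q' k \<omega> \<and> Z (2*k) \<omega> \<in> B} | k B. 1 \<le> k \<and> B \<in> sets borel}"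
  then obtain k B where "1 \<le> k" "B \<in> sets borel" "S = {\<omega> \<in> \<Omega>. q' k \<omega> \<and> Z (2*k) \<omega> \<in> B}"
    by blast
  then show "S \<in> {{\<omega> \<in> \<Omega>. q i \<omega> \<and> Z i \<omega> \<in> B} | i B. odd i \<and> B \<in> sets borel}"
    using Z_pair q by (intro CollectI exI[of _ "2*k-1"] exI[of _ B]) auto
next
  fix S assume "S \<in> {{\<omega> \<in> \<Omega>. q i \<omega> \<and> Z i \<omega> \<in> B} | i B. odd i \<and> B \<in> sets (borel :: 'e measure)}"
  then obtain i B where B: "B \<in> sets borel" and S: "S = {\<omega> \<in> \<Omega>. q i \<omega> \<and> Z i \<omega> \<in> B}"
    and "odd i"
    by blast
  define k where "k = (i+1) div 2"
  from \<open>odd i\<close> have k: "1 \<le> k" "2*k-1 = i"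
    by (auto simp: k_def elim!: oddE)
  then have "S = {\<omega> \<in> \<Omega>. q' k \<omega> \<and> Z (2*k) \<omega> \<in> B}"
    using S Z_pair[OF k(1)] q[OF k(1)] by auto
  then show "S \<in> {{\<omega> \<in> \<Omega>. q' k \<omega> \<and> Z (2*k) \<omega> \<in> B} | k B. 1 \<le> k \<and> B \<in> sets borel}"
    using k(1) B by blast
qed


text \<open>\<open>act i\<close> stands for the activity event \<open>T_i \<le> t < T_(i+1)\<close> (or \<open>T_i < t \<le> T_(i+1)\<close>) of the
  pair with odd index \<open>i\<close>; marks are indexed by this odd index, which the pairing
  \<open>Z_(2k-1) = Z_(2k)\<close> makes equivalent to the paper's indexing by \<open>2k\<close>.\<close>
locale active_marks =
  fixes P :: "'w measure" and T :: "nat \<Rightarrow> 'w \<Rightarrow> ennreal" and Z :: "nat \<Rightarrow> 'w \<Rightarrow> 'e::topological_space"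
    and M I :: "nat set" and act :: "nat \<Rightarrow> 'w \<Rightarrow> bool"
  assumes T_measurable[measurable]: "\<And>i. T i \<in> borel_measurable P"
    and Z_measurable[measurable]: "\<And>i. Z i \<in> borel_measurable P"
    and act_measurable[measurable]: "\<And>i. Measurable.pred P (act i)"
    and finite_M: "finite M" and odd_M: "\<And>i. i \<in> M \<Longrightarrow> odd i" and finite_I: "finite I"
begin

definition marks :: "'w set set" where
  "marks = {{\<omega> \<in> space P. act i \<omega> \<and> Z i \<omega> \<in> B} | i B. odd i \<and> B \<in> sets (borel :: 'e measure)}"

definition observed :: "'w measure" where
  "observed = sigma (space P)
    (marks \<union> null_sets (completion P) \<union> sets (sigmaRV P (RI T Z I) (RI_space I)))"

definition active :: "'w set" where
  "active = {\<omega> \<in> space P. (\<forall>i\<in>M. act i \<omega>) \<and> (\<forall>i. odd i \<and> i \<notin> M \<longrightarrow> \<not> act i \<omega>)}"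

abbreviation H :: "'w measure" where
  "H \<equiv> sigmaRV P (ZM_RI T Z M I) (ZM_RI_space M I)"

lemma ZM_RI_measurable_P: "ZM_RI T Z M I \<in> measurable P (ZM_RI_space M I)"
  using finite_I by (intro ZM_RI_measurable) auto

lemma RI_measurable_P: "RI T Z I \<in> measurable P (RI_space I)"
  using finite_I by (intro RI_measurable) auto

lemma sets_R: "sets (sigmaRV P (RI T Z I) (RI_space I)) = {RI T Z I -` B \<inter> space P | B. B \<in> sets (RI_space I)}"
  unfolding sigmaRV_def using measurable_space[OF RI_measurable_P]
  by (intro sets_vimage_algebra2) auto

lemma sets_H: "sets H = {ZM_RI T Z M I -` E \<inter> space P | E. E \<in> sets (ZM_RI_space M I)}"
  unfolding sigmaRV_def using measurable_space[OF ZM_RI_measurable_P]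
  by (intro sets_vimage_algebra2) auto

lemma generators_completion:
  "marks \<union> null_sets (completion P) \<union> sets (sigmaRV P (RI T Z I) (RI_space I)) \<subseteq> sets (completion P)"
proof -
  have "marks \<subseteq> sets P"
    unfolding marks_def by auto
  moreover have "sets (sigmaRV P (RI T Z I) (RI_space I)) \<subseteq> sets P"
    using RI_measurable_P by (simp add: sigmaRV_def measurable_iff_sets)
  ultimately show ?thesis
    by (auto dest: null_setsD2)
qed

lemma generators_Pow:
  "marks \<union> null_sets (completion P) \<union> sets (sigmaRV P (RI T Z I) (RI_space I)) \<subseteq> Pow (space P)"
  using generators_completion sets.space_closed[of "completion P"] by auto

lemma space_observed: "space observed = space P"
  unfolding observed_def by (rule space_measure_of[OF generators_Pow])

lemma sets_observed: "sets observed =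
    sigma_sets (space P) (marks \<union> null_sets (completion P) \<union> sets (sigmaRV P (RI T Z I) (RI_space I)))"
  unfolding observed_def by (rule sets_measure_of[OF generators_Pow])

lemma subalgebra_observed: "subalgebra (completion P) observed"
  using sets.sigma_sets_subset[OF generators_completion]
  by (simp add: subalgebra_def space_observed sets_observed)

lemma marks_observed: "odd i \<Longrightarrow> B \<in> sets borel \<Longrightarrow> {\<omega> \<in> space P. act i \<omega> \<and> Z i \<omega> \<in> B} \<in> sets observed"
  unfolding sets_observed marks_def by (intro sigma_sets.Basic) blast

lemma pred_act_observed: "odd i \<Longrightarrow> Measurable.pred observed (act i)"
  using marks_observed[of i UNIV] by (simp add: pred_def space_observed)

lemma active_observed: "active \<in> sets observed"
proof -
  have "Measurable.pred observed (\<lambda>\<omega>. (i \<in> M \<longrightarrow> act i \<omega>) \<and> (odd i \<and> i \<notin> M \<longrightarrow> \<not> act i \<omega>))" for i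
  proof (cases "odd i")
    case True
    then show ?thesis using pred_act_observed[OF True] by measurable
  next
    case False
    then have "i \<notin> M" using odd_M by auto
    with False show ?thesis by simp
  qed
  then have "Measurable.pred observed (\<lambda>\<omega>. \<forall>i. (i \<in> M \<longrightarrow> act i \<omega>) \<and> (odd i \<and> i \<notin> M \<longrightarrow> \<not> act i \<omega>))"
    by measurable
  moreover have "active = {\<omega> \<in> space observed.
      \<forall>i. (i \<in> M \<longrightarrow> act i \<omega>) \<and> (odd i \<and> i \<notin> M \<longrightarrow> \<not> act i \<omega>)}"
    by (auto simp: active_def space_observed)
  ultimately show ?thesis
    by (simp add: pred_def)
qed

lemma active_in_P: "active \<in> sets P"
  unfolding active_def using finite_M by measurable


lemma measurable_mark_observed:
  assumes "odd i"
  shows "(\<lambda>\<omega>. if act i \<omega> then Z i \<omega> else e) \<in> measurable observed borel"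
proof (rule measurableI)
  fix B :: "'e set" assume B: "B \<in> sets borel"
  have "(\<lambda>\<omega>. if act i \<omega> then Z i \<omega> else e) -` B \<inter> space observed
      = {\<omega> \<in> space P. act i \<omega> \<and> Z i \<omega> \<in> B} \<union> (if e \<in> B then {\<omega> \<in> space observed. \<not> act i \<omega>} else {})"
    by (auto simp: space_observed split: if_split_asm)
  also have "\<dots> \<in> sets observed"
    using marks_observed[OF assms B] pred_act_observed[OF assms] by auto
  finally show "(\<lambda>\<omega>. if act i \<omega> then Z i \<omega> else e) -` B \<inter> space observed \<in> sets observed" .
qed auto

lemma RI_observed: "RI T Z I \<in> measurable observed (RI_space I)"
  unfolding measurable_iff_sets space_observed
  using measurable_space[OF RI_measurable_P] sets_observed
  by (auto simp: sigmaRV_def intro: sigma_sets.Basic)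

lemma active_inter_H:
  assumes "S' \<in> sets H"
  shows "active \<inter> S' \<in> sets observed"
proof -
  obtain E where E: "E \<in> sets (ZM_RI_space M I)" and S': "S' = ZM_RI T Z M I -` E \<inter> space P"
    using assms by (auto simp: sets_H)
  \<comment> \<open>on \<open>active\<close>, \<open>Z_M\<close> agrees with the observable marks\<close>
  define X' where "X' \<omega> = (\<lambda>i\<in>M. if act i \<omega> then Z i \<omega> else undefined, RI T Z I \<omega>)" for \<omega>
  have "X' \<in> measurable observed (ZM_RI_space M I)"
    unfolding X'_def[abs_def] ZM_RI_space_def EI_def
    using odd_M by (intro measurable_Pair measurable_restrict measurable_mark_observed RI_observed)
  then have "X' -` E \<inter> space observed \<in> sets observed"
    using E by (rule measurable_sets)
  moreover have "active \<inter> S' = active \<inter> (X' -` E \<inter> space observed)"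
    by (auto simp: S' X'_def ZM_RI_def ZI_def active_def space_observed cong: restrict_cong)
  ultimately show ?thesis
    using active_observed by auto
qed

lemma trace_mark_in_H:
  assumes "odd i" and B: "B \<in> sets (borel :: 'e measure)"
  shows "\<exists>S'\<in>sets H. {\<omega> \<in> space P. act i \<omega> \<and> Z i \<omega> \<in> B} \<inter> active = S' \<inter> active"
proof (cases "i \<in> M")
  case True
  let ?E = "(\<lambda>p. fst p i) -` B \<inter> space (ZM_RI_space M I)"
  have "(\<lambda>p. fst p i) \<in> measurable (ZM_RI_space M I) borel"
    unfolding ZM_RI_space_def EI_def
    by (rule measurable_compose[OF measurable_fst measurable_component_singleton[OF True]])
  then have "ZM_RI T Z M I -` ?E \<inter> space P \<in> sets H"
    using B unfolding sigmaRV_def by (intro in_vimage_algebra measurable_sets)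
  moreover have "{\<omega> \<in> space P. act i \<omega> \<and> Z i \<omega> \<in> B} \<inter> active = (ZM_RI T Z M I -` ?E \<inter> space P) \<inter> active"
    using True measurable_space[OF ZM_RI_measurable_P]
    by (auto simp: active_def ZM_RI_def ZI_def)
  ultimately show ?thesis by blast
next
  case False
  then have "{\<omega> \<in> space P. act i \<omega> \<and> Z i \<omega> \<in> B} \<inter> active = {} \<inter> active"
    using \<open>odd i\<close> by (auto simp: active_def)
  then show ?thesis by blast
qed

lemma trace_observed_in_H:
  assumes "S \<in> sets observed"
  shows "\<exists>S'\<in>sets H. AE \<omega> in completion P. (\<omega> \<in> S \<inter> active) = (\<omega> \<in> S' \<inter> active)"
  using assms unfolding sets_observed
proof (rule sigma_sets_AE_trace)
  show "space H = space P" by (simp add: sigmaRV_def)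
  show "active \<subseteq> space P" by (auto simp: active_def)
  fix S assume "S \<in> marks \<union> null_sets (completion P) \<union> sets (sigmaRV P (RI T Z I) (RI_space I))"
  then consider (mark) i B where "odd i" "B \<in> sets borel" "S = {\<omega> \<in> space P. act i \<omega> \<and> Z i \<omega> \<in> B}"
    | (null) "S \<in> null_sets (completion P)"
    | (RI) B where "B \<in> sets (RI_space I)" "S = RI T Z I -` B \<inter> space P"
    unfolding marks_def sets_R by blast
  then show "\<exists>S'\<in>sets H. AE \<omega> in completion P. (\<omega> \<in> S \<inter> active) = (\<omega> \<in> S' \<inter> active)"
  proof cases
    case mark
    then obtain S' where "S' \<in> sets H" and eq: "S \<inter> active = S' \<inter> active"
      using trace_mark_in_H by blast
    then show ?thesis
      by (intro bexI[of _ S'] AE_I2) (simp only: eq)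
  next
    case null
    then show ?thesis
      by (intro bexI[of _ "{}"]) (auto dest: AE_not_in elim!: eventually_mono)
  next
    case RI
    then have "S = ZM_RI T Z M I -` (space (EI M) \<times> B) \<inter> space P"
      by (auto simp: ZM_RI_def ZI_def EI_def space_PiM)
    moreover have "space (EI M) \<times> B \<in> sets (ZM_RI_space M I)"
      using RI by (simp add: ZM_RI_space_def)
    ultimately have "S \<in> sets H"
      unfolding sigmaRV_def by (simp add: in_vimage_algebra)
    then show ?thesis by blast
  qed
qed

lemma trace_on_event_observed:
  assumes "prob_space P" and K: "regular_cond_prob P (ZM_RI T Z M I) (ZM_RI_space M I) K"
  shows "trace_on_event P H K observed active"
proof -
  have "sets H \<subseteq> sets P"
    using ZM_RI_measurable_P by (simp add: sigmaRV_def measurable_iff_sets)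
  moreover from K have "\<And>\<omega>. \<omega> \<in> space P \<Longrightarrow> prob_space (K \<omega>)"
    and "\<And>\<omega>. \<omega> \<in> space P \<Longrightarrow> sets (K \<omega>) = sets P"
    and "\<And>B. B \<in> sets P \<Longrightarrow> (\<lambda>\<omega>. emeasure (K \<omega>) B) \<in> borel_measurable H"
    and "\<And>B C. B \<in> sets P \<Longrightarrow> C \<in> sets H \<Longrightarrow>
      (\<integral>\<^sup>+\<omega>. emeasure (K \<omega>) B * indicator C \<omega> \<partial>P) = emeasure P (B \<inter> C)"
    unfolding regular_cond_prob_def by blast+
  ultimately show ?thesis
    using assms(1) subalgebra_observed active_observed active_in_P trace_observed_in_H active_inter_H
    by (intro trace_on_event.intro regular_cond_kernel.intro trace_on_event_axioms.intro)
      (simp_all add: sigmaRV_def)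
qed

theorem indicator_mult_real_cond_exp_observed:
  fixes \<xi> :: "'w \<Rightarrow> real"
  assumes "prob_space P" and "regular_cond_prob P (ZM_RI T Z M I) (ZM_RI_space M I) K"
    and "\<xi> \<in> borel_measurable P" and "integrable (completion P) \<xi>"
  shows "AE \<omega> in completion P. indicator active \<omega> * real_cond_exp (completion P) observed \<xi> \<omega>
    = indicator active \<omega> * ((\<integral>x. \<xi> x * indicator active x \<partial>K \<omega>) / measure (K \<omega>) active)"
  using trace_on_event.indicator_mult_real_cond_exp[OF trace_on_event_observed] assms by blast

end

lemma indicator_mult_real_cond_exp_pairs:
  fixes Z :: "nat \<Rightarrow> 'w \<Rightarrow> 'e::topological_space" and \<xi> :: "'w \<Rightarrow> real"
  assumes P: "prob_space P"
    and T: "\<And>i. T i \<in> borel_measurable P" and Z: "\<And>i. Z i \<in> borel_measurable P"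
    and Z_pair: "\<And>k. 1 \<le> k \<Longrightarrow> Z (2*k-1) = Z (2*k)"
    and M: "M \<in> idxM" and I: "I \<in> idxN"
    and K: "regular_cond_prob P (ZM_RI T Z M I) (ZM_RI_space M I) K"
    and \<xi>: "\<xi> \<in> borel_measurable P" "integrable (completion P) \<xi>"
    and act: "\<And>i. Measurable.pred P (act i)"
    and act': "\<And>k \<omega>. 1 \<le> k \<Longrightarrow> act' k \<omega> = act (2*k-1) \<omega>"
  defines "A \<equiv> {\<omega> \<in> space P. (\<forall>i\<in>M. act i \<omega>) \<and> (\<forall>i. odd i \<and> i \<notin> M \<longrightarrow> \<not> act i \<omega>)}"
  shows "AE \<omega> in completion P. indicator A \<omega> * real_cond_exp (completion P)
      (sigma (space P) ({{\<omega> \<in> space P. act' k \<omega> \<and> Z (2*k) \<omega> \<in> B} | k B. 1 \<le> k \<and> B \<in> sets borel}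
        \<union> null_sets (completion P) \<union> sets (sigmaRV P (RI T Z I) (RI_space I)))) \<xi> \<omega>
    = indicator A \<omega> * ((\<integral>x. \<xi> x * indicator A x \<partial>K \<omega>) / measure (K \<omega>) A)"
proof -
  interpret active_marks P T Z M I act
    using T Z act M I by unfold_locales (auto simp: idxM_def idxN_def)
  have "{{\<omega> \<in> space P. act' k \<omega> \<and> Z (2*k) \<omega> \<in> B} | k B. 1 \<le> k \<and> B \<in> sets borel} = marks"
    unfolding marks_def using Z_pair act' by (rule odd_pair_generators_eq)
  moreover have "A = active"
    by (simp add: A_def active_def)
  ultimately show ?thesis
    using indicator_mult_real_cond_exp_observed[OF P K \<xi>] by (simp only: observed_def)
qed

theorem mainTheorem2:
  fixes P0 :: "'w::polish_space measure"
    and T :: "nat \<Rightarrow> 'w \<Rightarrow> ennreal"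
    and Z :: "nat \<Rightarrow> 'w \<Rightarrow> 'e::polish_space"
    and K :: "'w \<Rightarrow> 'w measure"
    and \<xi> :: "'w \<Rightarrow> real"
    and M I :: "nat set" and t :: real
  assumes P0: "prob_space P0" and P0_borel: "sets P0 = sets borel"
    and T_meas: "\<And>i. T i \<in> borel_measurable P0"
    and Z_meas: "\<And>i. Z i \<in> borel_measurable P0"
    and Z_pair: "\<And>i. 1 \<le> i \<Longrightarrow> Z (2*i-1) = Z (2*i)"
    and T_le: "\<And>i \<omega>. 1 \<le> i \<Longrightarrow> \<omega> \<in> space P0 \<Longrightarrow> T (2*i-1) \<omega> \<le> T (2*i) \<omega>"
    and T_less: "\<And>i \<omega>. 1 \<le> i \<Longrightarrow> \<omega> \<in> space P0 \<Longrightarrow> T (2*i) \<omega> < \<infinity> \<Longrightarrow> T (2*i-1) \<omega> < T (2*i) \<omega>"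
    and finite_count: "\<And>s::real. 0 \<le> s \<Longrightarrow>
        (\<integral>\<^sup>+\<omega>. (\<Sum>i. indicator {\<omega>. T (Suc i) \<omega> \<le> ennreal s} \<omega>) \<partial>P0) < \<infinity>"
    and M: "M \<in> idxM" and I: "I \<in> idxN"
    and K: "regular_cond_prob P0 (ZM_RI T Z M I) (ZM_RI_space M I) K"
    and \<xi>: "\<xi> \<in> borel_measurable P0" "integrable (completion P0) \<xi>"
  shows
    "(0 \<le> t \<longrightarrow> (AE \<omega> in completion P0.
        indicator (AM P0 T M t) \<omega> * real_cond_exp (completion P0) (G_RI (completion P0) T Z I t) \<xi> \<omega>
        = indicator (AM P0 T M t) \<omega> *
          ((\<integral>x. \<xi> x * indicator (AM P0 T M t) x \<partial>K \<omega>) / measure (K \<omega>) (AM P0 T M t))))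
     \<and> (0 < t \<longrightarrow> (AE \<omega> in completion P0.
        indicator (AMm P0 T M t) \<omega> * real_cond_exp (completion P0) (Gm_RI (completion P0) T Z I t) \<xi> \<omega>
        = indicator (AMm P0 T M t) \<omega> *
          ((\<integral>x. \<xi> x * indicator (AMm P0 T M t) x \<partial>K \<omega>) / measure (K \<omega>) (AMm P0 T M t))))"
proof (intro conjI impI)
  note pairs = indicator_mult_real_cond_exp_pairs[OF P0 T_meas Z_meas Z_pair M I K \<xi>, unfolded sigmaRV_def]
  have [measurable]: "\<And>i. T i \<in> borel_measurable P0" by (rule T_meas)
  have Gt_gen_eq: "Gt_gen (completion P0) T Z t = {{\<omega> \<in> space P0. (T (2*k-1) \<omega> \<le> ennreal t \<and> ennreal t < T (2*k) \<omega>)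
      \<and> Z (2*k) \<omega> \<in> B} | k B. 1 \<le> k \<and> B \<in> sets borel}"
    by (simp add: Gt_gen_def conj_assoc)
  show "AE \<omega> in completion P0.
      indicator (AM P0 T M t) \<omega> * real_cond_exp (completion P0) (G_RI (completion P0) T Z I t) \<xi> \<omega>
      = indicator (AM P0 T M t) \<omega> *
        ((\<integral>x. \<xi> x * indicator (AM P0 T M t) x \<partial>K \<omega>) / measure (K \<omega>) (AM P0 T M t))"
    unfolding G_RI_def AM_def sigmaRV_def space_completion Gt_gen_eq by (rule pairs) simp_all
  have Gtm_gen_eq: "Gtm_gen (completion P0) T Z t = {{\<omega> \<in> space P0. (T (2*k-1) \<omega> < ennreal t \<and> ennreal t \<le> T (2*k) \<omega>)
      \<and> Z (2*k) \<omega> \<in> B} | k B. 1 \<le> k \<and> B \<in> sets borel}"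
    by (simp add: Gtm_gen_def conj_assoc)
  show "AE \<omega> in completion P0.
      indicator (AMm P0 T M t) \<omega> * real_cond_exp (completion P0) (Gm_RI (completion P0) T Z I t) \<xi> \<omega>
      = indicator (AMm P0 T M t) \<omega> *
        ((\<integral>x. \<xi> x * indicator (AMm P0 T M t) x \<partial>K \<omega>) / measure (K \<omega>) (AMm P0 T M t))"
    unfolding Gm_RI_def AMm_def sigmaRV_def space_completion Gtm_gen_eq by (rule pairs) simp_all
qed

end
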